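(* Let $m_1,m_2\in\mathbb{N}$, $a>0$, and let $v$ be an $m_1\times m_2$ matrix function with locally integrable entries and $\operatorname{supp}(V)\subseteq[0,a]$. Let $z\in\mathbb{C}_+$ and $f\in\big[L^2((0,\infty))\big]^m$ with $\operatorname{supp}(f)\subseteq[0,a]$. Then $(L-zI)^{-1}f=Y(\cdot,z)$, where \[ Y(x,z)=w(x,z)\Big(g(z)+i\int_0^x w(t,z)^{-1}Jf(t)\,dt\Big),\qquad g(z)=\begin{bmatrix}0_{m_1\times 1}\\ -i\begin{bmatrix}0_{m_2\times m_1}& I_{m_2}\end{bmatrix}\int_0^a w(t,z)^{-1}Jf(t)\,dt\end{bmatrix}. \]
   Context: $m=m_1+m_2$, $J=\begin{bmatrix}I_{m_1}&0\\0&-I_{m_2}\end{bmatrix}$, $V=\begin{bmatrix}0_{m_1}&v\\ v^*&0_{m_2}\end{bmatrix}$; Dirac-type system $y'(x,z)=i(zJ+JV(x))y(x,z)$, $x\ge0$. $u(x,z)$ is its $m\times m$ fundamental solution with $u(0,z)=I_m$; $\varphi(z)$ is its Weyl–Titchmarsh function, i.e., the unique $m_2\times m_1$ matrix function holomorphic in $\mathbb{C}_+$ with $u(\cdot,z)\begin{bmatrix}I_{m_1}\\ \varphi(z)\end{bmatrix}$ having entries in $L^2((0,\infty))$. Set $Q(z)=\begin{bmatrix}I_{m_1}&0\\ \varphi(z)&I_{m_2}\end{bmatrix}$ and $w(x,z)=u(x,z)Q(z)$. $L$ is the operator in $\big[L^2((0,\infty))\big]^m$ generated by the differential expression $\mathcal{L}=-iJ\frac{d}{dx}-V(x)$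 on functions $Y$ satisfying the boundary condition $\begin{bmatrix}I_{m_1}&0_{m_1\times m_2}\end{bmatrix}Y(0)=0$. *)

theory Defs
  imports "HOL-Analysis.Analysis" "HOL-Complex_Analysis.Complex_Analysis"
begin

text \<open>The index set of size m = m1 + m2 is the sum type 'm1 + 'm2
  (Inl indices = first m1 coordinates, Inr indices = last m2 coordinates).
  Vectors in C^m are complex^('m1+'m2), m x m matrices are complex^('m1+'m2)^('m1+'m2),
  the m1 x m2 block v(x) is complex^'m2^'m1 (row index 'm1, column index 'm2),
  the m2 x m1 Weyl function phi(z) is complex^'m1^'m2.\<close>

definition Jmat :: "complex ^ ('m1::finite + 'm2::finite) ^ ('m1 + 'm2)" where
  "Jmat = (\<chi> i j. if i = j then (case i of Inl _ \<Rightarrow> 1 | Inr _ \<Rightarrow> -1) else 0)"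

definition Vmat :: "complex ^ 'm2 ^ 'm1 \<Rightarrow> complex ^ ('m1::finite + 'm2::finite) ^ ('m1 + 'm2)" where
  "Vmat B = (\<chi> i j. case (i, j) of
       (Inl p, Inr q) \<Rightarrow> B $ p $ q
     | (Inr q, Inl p) \<Rightarrow> cnj (B $ p $ q)
     | _ \<Rightarrow> 0)"

definition Qmat :: "complex ^ 'm1 ^ 'm2 \<Rightarrow> complex ^ ('m1::finite + 'm2::finite) ^ ('m1 + 'm2)" where
  "Qmat P = (\<chi> i j. case (i, j) of
       (Inr q, Inl p) \<Rightarrow> P $ q $ p
     | _ \<Rightarrow> (if i = j then 1 else 0))"

definition IPhi :: "complex ^ 'm1 ^ 'm2 \<Rightarrow> complex ^ 'm1 ^ ('m1::finite + 'm2::finite)" where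
  "IPhi P = (\<chi> i p. case i of Inl p' \<Rightarrow> (if p' = p then 1 else 0) | Inr q \<Rightarrow> P $ q $ p)"

definition Dcoef :: "(real \<Rightarrow> complex ^ 'm2 ^ 'm1) \<Rightarrow> complex \<Rightarrow> real
    \<Rightarrow> complex ^ ('m1::finite + 'm2::finite) ^ ('m1 + 'm2)" where
  "Dcoef v z x = mat \<i> ** (mat z ** Jmat + Jmat ** Vmat (v x))"

text \<open>u is the m x m fundamental solution of y' = i(zJ + JV)y normalized by u(0,z) = I_m,
  i.e. u(.,z) is the (locally absolutely continuous) solution of the integral equation
  u(x,z) = I_m + int_0^x i(zJ + JV(t)) u(t,z) dt, x >= 0.\<close>
definition fund_sol :: "(real \<Rightarrow> complex ^ 'm2 ^ 'm1) \<Rightarrow> (real \<Rightarrow> complex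
    \<Rightarrow> complex ^ ('m1::finite + 'm2::finite) ^ ('m1 + 'm2)) \<Rightarrow> bool" where
  "fund_sol v u \<longleftrightarrow> (\<forall>z x. x \<ge> 0 \<longrightarrow>
      ((\<lambda>t. Dcoef v z t ** u t z) has_integral (u x z - mat 1)) {0..x})"

definition L2_on :: "real set \<Rightarrow> (real \<Rightarrow> 'a::euclidean_space) \<Rightarrow> bool" where
  "L2_on S f \<longleftrightarrow> set_borel_measurable lborel S f \<and> set_integrable lborel S (\<lambda>x. (norm (f x))\<^sup>2)"

definition weyl_fun :: "(real \<Rightarrow> complex \<Rightarrow> complex ^ ('m1::finite + 'm2::finite) ^ ('m1 + 'm2))
    \<Rightarrow> (complex \<Rightarrow> complex ^ 'm1 ^ 'm2) \<Rightarrow> bool" where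
  "weyl_fun u \<phi> \<longleftrightarrow>
     (\<forall>q p. (\<lambda>z. \<phi> z $ q $ p) holomorphic_on {z. Im z > 0}) \<and>
     (\<forall>z. Im z > 0 \<longrightarrow> L2_on {0<..} (\<lambda>x. u x z ** IPhi (\<phi> z)))"

text \<open>The differential expression  (calL Y)(x) = -i J Y'(x) - V(x) Y(x), where DY is the
  (a.e.) derivative of the locally absolutely continuous function Y.\<close>
definition Lexpr :: "(real \<Rightarrow> complex ^ 'm2 ^ 'm1) \<Rightarrow> (real \<Rightarrow> complex ^ ('m1::finite + 'm2::finite))
    \<Rightarrow> (real \<Rightarrow> complex ^ ('m1 + 'm2)) \<Rightarrow> real \<Rightarrow> complex ^ ('m1 + 'm2)" where
  "Lexpr v Y DY x = (- \<i>) *s (Jmat *v DY x) - Vmat (v x) *v Y x"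

text \<open>Y belongs to the domain of L, with DY a derivative of Y: Y in L^2(0,oo), Y locally
  absolutely continuous on [0,oo) (Y(x) = Y(0) + int_0^x DY with DY locally integrable),
  calL Y in L^2(0,oo), and the boundary condition [I_{m1} 0] Y(0) = 0.\<close>
definition L_dom :: "(real \<Rightarrow> complex ^ 'm2 ^ 'm1) \<Rightarrow> (real \<Rightarrow> complex ^ ('m1::finite + 'm2::finite))
    \<Rightarrow> (real \<Rightarrow> complex ^ ('m1 + 'm2)) \<Rightarrow> bool" where
  "L_dom v Y DY \<longleftrightarrow>
     L2_on {0<..} Y \<and>
     (\<forall>b\<ge>0. set_integrable lborel {0..b} DY) \<and>
     (\<forall>x\<ge>0. (DY has_integral (Y x - Y 0)) {0..x}) \<and>
     L2_on {0<..} (Lexpr v Y DY) \<and>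
     (\<forall>p. Y 0 $ Inl p = 0)"

definition L_resolvent_eq :: "(real \<Rightarrow> complex ^ 'm2 ^ 'm1) \<Rightarrow> complex
    \<Rightarrow> (real \<Rightarrow> complex ^ ('m1::finite + 'm2::finite)) \<Rightarrow> (real \<Rightarrow> complex ^ ('m1 + 'm2)) \<Rightarrow> bool" where
  "L_resolvent_eq v z f Y \<longleftrightarrow>
     (\<exists>DY. L_dom v Y DY \<and> (AE x in lborel. x > 0 \<longrightarrow> Lexpr v Y DY x - z *s Y x = f x))"

definition wfun :: "(real \<Rightarrow> complex \<Rightarrow> complex ^ ('m1::finite + 'm2::finite) ^ ('m1 + 'm2))
    \<Rightarrow> (complex \<Rightarrow> complex ^ 'm1 ^ 'm2) \<Rightarrow> real \<Rightarrow> complex \<Rightarrow> complex ^ ('m1 + 'm2) ^ ('m1 + 'm2)" where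
  "wfun u \<phi> x z = u x z ** Qmat (\<phi> z)"

definition Wint :: "(real \<Rightarrow> complex \<Rightarrow> complex ^ ('m1::finite + 'm2::finite) ^ ('m1 + 'm2))
    \<Rightarrow> (complex \<Rightarrow> complex ^ 'm1 ^ 'm2) \<Rightarrow> (real \<Rightarrow> complex ^ ('m1 + 'm2)) \<Rightarrow> complex \<Rightarrow> real
    \<Rightarrow> complex ^ ('m1 + 'm2)" where
  "Wint u \<phi> f z x = integral {0..x} (\<lambda>t. matrix_inv (wfun u \<phi> t z) *v (Jmat *v f t))"

definition gvec :: "(real \<Rightarrow> complex \<Rightarrow> complex ^ ('m1::finite + 'm2::finite) ^ ('m1 + 'm2))
    \<Rightarrow> (complex \<Rightarrow> complex ^ 'm1 ^ 'm2) \<Rightarrow> (real \<Rightarrow> complex ^ ('m1 + 'm2)) \<Rightarrow> real \<Rightarrow> complex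
    \<Rightarrow> complex ^ ('m1 + 'm2)" where
  "gvec u \<phi> f a z = (\<chi> i. case i of Inl _ \<Rightarrow> 0 | Inr q \<Rightarrow> - \<i> * Wint u \<phi> f z a $ Inr q)"

definition Ysol :: "(real \<Rightarrow> complex \<Rightarrow> complex ^ ('m1::finite + 'm2::finite) ^ ('m1 + 'm2))
    \<Rightarrow> (complex \<Rightarrow> complex ^ 'm1 ^ 'm2) \<Rightarrow> (real \<Rightarrow> complex ^ ('m1 + 'm2)) \<Rightarrow> real \<Rightarrow> real \<Rightarrow> complex
    \<Rightarrow> complex ^ ('m1 + 'm2)" where
  "Ysol u \<phi> f a x z = wfun u \<phi> x z *v (gvec u \<phi> f a z + \<i> *s Wint u \<phi> f z x)"

end

theory Submission
  imports Defs
begin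

(*
  Existence is variation of constants. Since A(conj z)^* J + J A(z) = 0 for the coefficient
  A(z) = i (z J + J V), the fundamental solution is J-unitary, u(x, conj z)^* J u(x, z) = J;
  hence w(x, z) is invertible with w^-1 = Q(-phi) J u(x, conj z)^* J, and
  Y = u Q (g + i int_0^x w^-1 J f) satisfies Y' = A Y + i J f, i.e. (calL - z) Y = f.
  The upper block of g vanishes, which is the boundary condition at 0. For x >= a the integral
  is constant and the lower block of g + i int_0^a w^-1 J f vanishes by the choice of g, so
  Y(x) = u(x, z) [I; phi(z)] c there, which is square integrable by the Weyl property.

  Uniqueness: the difference D of two solutions satisfies D' = A D, D(0) in {0} + C^m2 and
  (D^* J D)' = -2 Im z |D|^2. As -|D|^2 <= D^* J D and D(0)^* J D(0) <= 0, this gives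
  |D(x)|^2 >= 2 Im z int_0^x |D|^2, and a nonnegative integrable function dominating a
  positive multiple of its own primitive vanishes.

  All derivatives here are a.e. derivatives of absolutely continuous functions; the product
  rule for them is proved as an integration by parts, via Fubini.
*)

section \<open>Integration by parts for absolutely continuous functions\<close>

lemma set_integrable_bounded_linear:
  fixes f :: "'z \<Rightarrow> 'a::euclidean_space" and T :: "'a \<Rightarrow> 'b::euclidean_space"
  assumes "bounded_linear T" "set_integrable M S f"
  shows "set_integrable M S (\<lambda>t. T (f t))"
proof -
  interpret T: bounded_linear T by fact
  have "integrable M (\<lambda>t. T (indicator S t *\<^sub>R f t))"
    by (rule integrable_bounded_linear[OF assms(1)]) (use assms(2) in \<open>simp add: set_integrable_def\<close>)
  then show ?thesis by (simp add: set_integrable_def T.scaleR)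
qed

lemma has_integral_set_borel_integral:
  fixes f :: "'a::euclidean_space \<Rightarrow> 'b::euclidean_space"
  assumes "set_integrable lborel S f"
  shows "(f has_integral (LINT t:S|lborel. f t)) S"
  using set_borel_integral_eq_integral[OF assms] by (simp add: integrable_integral)

lemma borel_measurable_bounded_bilinear:
  fixes h :: "'a::euclidean_space \<Rightarrow> 'b::euclidean_space \<Rightarrow> 'c::euclidean_space"
  assumes "bounded_bilinear h" "f \<in> borel_measurable M" "g \<in> borel_measurable M"
  shows "(\<lambda>x. h (f x) (g x)) \<in> borel_measurable M"
proof -
  have "continuous_on UNIV (\<lambda>x. h (fst x) (snd x))"
    by (intro bounded_bilinear.continuous_on[OF assms(1)] continuous_on_fst continuous_on_snd
        continuous_on_id)
  then show ?thesis
    by (rule borel_measurable_continuous_Pair[OF assms(2,3), where H = h])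
qed

lemma set_integrable_bilinear_continuous:
  fixes h :: "'a::euclidean_space \<Rightarrow> 'b::euclidean_space \<Rightarrow> 'c::euclidean_space"
    and f :: "real \<Rightarrow> 'b" and g :: "real \<Rightarrow> 'a"
  assumes h: "bounded_bilinear h" and f: "set_integrable lborel {a..b} f"
    and g: "continuous_on {a..b} g"
  shows "set_integrable lborel {a..b} (\<lambda>t. h (g t) (f t))"
proof -
  interpret h: bounded_bilinear h by (rule h)
  obtain K where K: "\<And>x y. norm (h x y) \<le> norm x * norm y * K" and "K > 0"
    using h.pos_bounded by blast
  obtain C where C: "\<And>t. t \<in> {a..b} \<Longrightarrow> norm (g t) \<le> C"
    using compact_imp_bounded[OF compact_continuous_image[OF g compact_Icc]]
    unfolding bounded_iff by (meson imageI)
  have mg: "(\<lambda>t. indicator {a..b} t *\<^sub>R g t) \<in> borel_measurable lborel"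
    using borel_measurable_continuous_on_indicator[OF _ g] by (simp add: measurable_lborel1)
  have mf: "(\<lambda>t. indicator {a..b} t *\<^sub>R f t) \<in> borel_measurable lborel"
    using f unfolding set_integrable_def by (rule borel_measurable_integrable)
  from borel_measurable_bounded_bilinear[OF h mg mf]
  have "set_borel_measurable lborel {a..b} (\<lambda>t. h (g t) (f t))"
    unfolding set_borel_measurable_def
    by (rule measurable_cong[THEN iffD1, rotated])
       (simp add: h.scaleR_left h.scaleR_right indicator_def)
  moreover have "norm (h (g t) (f t)) \<le> norm ((C * K) *\<^sub>R f t)" if "t \<in> {a..b}" for t
  proof -
    have "norm (h (g t) (f t)) \<le> norm (g t) * (norm (f t) * K)"
      using K[of "g t" "f t"] by (simp add: mult.assoc)
    also have "\<dots> \<le> C * (norm (f t) * K)"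
      using C[OF that] \<open>K > 0\<close> by (intro mult_right_mono) auto
    also have "\<dots> \<le> norm ((C * K) *\<^sub>R f t)"
      using mult_left_mono[OF abs_ge_self[of "C * K"] norm_ge_zero[of "f t"]]
      by (simp add: algebra_simps)
    finally show ?thesis .
  qed
  ultimately show ?thesis
    by (intro set_integrable_bound[OF set_integrable_scaleR_right[OF f]] AE_I2) auto
qed

lemma set_integrable_lborel_insert:
  fixes f :: "real \<Rightarrow> 'a::euclidean_space"
  assumes "set_integrable lborel S f" "S \<in> sets lborel"
  shows "set_integrable lborel (insert x S) f"
proof -
  have "integrable lborel (\<lambda>t. indicator {x} t *\<^sub>R f x)"
    by (rule integrable_indicator) auto
  moreover have "indicator {x} t *\<^sub>R f x = indicator {x} t *\<^sub>R f t" for t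
    by (simp split: split_indicator)
  ultimately have "set_integrable lborel {x} f"
    by (simp add: set_integrable_def)
  from set_integrable_Un[OF this assms(1) _ assms(2)] show ?thesis
    by simp
qed

lemma has_integral_primitive_continuous_on:
  fixes f F :: "real \<Rightarrow> 'a::banach"
  assumes "\<And>x. x \<in> {a..b} \<Longrightarrow> (f has_integral (F x - F a)) {a..x}"
  shows "continuous_on {a..b} F"
proof (cases "a \<le> b")
  case True
  then have "f integrable_on {a..b}"
    using assms[of b] by auto
  then have "continuous_on {a..b} (\<lambda>x. F a + integral {a..x} f)"
    by (intro continuous_on_add continuous_on_const indefinite_integral_continuous_1)
  then show ?thesis
    by (rule continuous_on_eq) (simp add: integral_unique[OF assms])
qed simp

lemma integrable_bilinear_product:
  fixes h :: "'a::euclidean_space \<Rightarrow> 'b::euclidean_space \<Rightarrow> 'c::euclidean_space"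
    and f :: "real \<Rightarrow> 'a" and g :: "real \<Rightarrow> 'b"
  assumes h: "bounded_bilinear h" and f: "integrable lborel f" and g: "integrable lborel g"
  shows "integrable (lborel \<Otimes>\<^sub>M lborel) (\<lambda>p. h (f (fst p)) (g (snd p)))"
proof (rule lborel_pair.Fubini_integrable)
  interpret h: bounded_bilinear h by (rule h)
  have [measurable]: "f \<in> borel_measurable lborel" "g \<in> borel_measurable lborel"
    using f g by (simp_all add: borel_measurable_integrable)
  show meas [measurable]: "(\<lambda>p. h (f (fst p)) (g (snd p))) \<in> borel_measurable (lborel \<Otimes>\<^sub>M lborel)"
    by (rule borel_measurable_bounded_bilinear[OF h]) measurable
  have int_right: "integrable lborel (\<lambda>t. h c (g t))" for c
    by (rule integrable_bounded_linear[OF h.bounded_linear_right g])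
  then show "AE s in lborel. integrable lborel (\<lambda>t. h (f (fst (s, t))) (g (snd (s, t))))"
    by simp
  obtain K where K: "\<And>x y. norm (h x y) \<le> norm x * norm y * K" and "K > 0"
    using h.pos_bounded by blast
  have bound: "(LINT t|lborel. norm (h (f s) (g t))) \<le> norm (f s) * (K * (LINT t|lborel. norm (g t)))"
    for s
  proof -
    have "norm (h (f s) (g t)) \<le> norm (f s) * K * norm (g t)" for t
      using K[of "f s" "g t"] by (simp add: mult_ac)
    then have "(LINT t|lborel. norm (h (f s) (g t))) \<le> (LINT t|lborel. norm (f s) * K * norm (g t))"
      using int_right[of "f s"] integrable_norm[OF g] by (intro integral_mono) simp_all
    then show ?thesis
      by (simp add: mult.assoc)
  qed
  show "integrable lborel (\<lambda>s. LINT t|lborel. norm (h (f (fst (s, t))) (g (snd (s, t)))))"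
  proof (rule Bochner_Integration.integrable_bound)
    show "integrable lborel (\<lambda>s. norm (f s) * (K * (LINT t|lborel. norm (g t))))"
      by (intro integrable_mult_left integrable_norm f)
    show "(\<lambda>s. LINT t|lborel. norm (h (f (fst (s, t))) (g (snd (s, t))))) \<in> borel_measurable lborel"
      by measurable
    show "AE s in lborel. norm (LINT t|lborel. norm (h (f (fst (s, t))) (g (snd (s, t)))))
        \<le> norm (norm (f s) * (K * (LINT t|lborel. norm (g t))))"
      using bound by (intro AE_I2) (auto simp: integral_nonneg_AE intro: order_trans[OF _ abs_ge_self])
  qed
qed

lemma integral_bilinear_split_diagonal:
  fixes h :: "'a::euclidean_space \<Rightarrow> 'b::euclidean_space \<Rightarrow> 'c::euclidean_space"
    and f :: "real \<Rightarrow> 'a" and g :: "real \<Rightarrow> 'b"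
  assumes h: "bounded_bilinear h" and f: "integrable lborel f" and g: "integrable lborel g"
  shows "integrable lborel (\<lambda>t. h (LINT s|lborel. indicator {..t} s *\<^sub>R f s) (g t))"
    and "integrable lborel (\<lambda>s. h (f s) (LINT t|lborel. indicator {..<s} t *\<^sub>R g t))"
    and "(LINT t|lborel. h (LINT s|lborel. indicator {..t} s *\<^sub>R f s) (g t))
       + (LINT s|lborel. h (f s) (LINT t|lborel. indicator {..<s} t *\<^sub>R g t))
       = h (LINT s|lborel. f s) (LINT t|lborel. g t)"
proof -
  interpret h: bounded_bilinear h by (rule h)
  have [measurable]: "f \<in> borel_measurable lborel" "g \<in> borel_measurable lborel"
    using f g by (simp_all add: borel_measurable_integrable)
  define Q where "Q = (\<lambda>p. h (f (fst p)) (g (snd p)))"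
  define P1 where "P1 = (\<lambda>p. h (indicator {..snd p} (fst p) *\<^sub>R f (fst p)) (g (snd p)))"
  define P2 where "P2 = (\<lambda>p. h (f (fst p)) (indicator {..<fst p} (snd p) *\<^sub>R g (snd p)))"
  have Q_int: "integrable (lborel \<Otimes>\<^sub>M lborel) Q"
    unfolding Q_def by (rule integrable_bilinear_product[OF h f g])
  have [measurable]:
    "(\<lambda>p::real \<times> real. indicator {..snd p} (fst p) :: real)
      \<in> borel_measurable (lborel \<Otimes>\<^sub>M lborel)"
    "(\<lambda>p::real \<times> real. indicator {..<fst p} (snd p) :: real)
      \<in> borel_measurable (lborel \<Otimes>\<^sub>M lborel)"
    unfolding indicator_def of_bool_def atMost_iff lessThan_iff by measurable
  have P_meas: "P1 \<in> borel_measurable (lborel \<Otimes>\<^sub>M lborel)"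
    "P2 \<in> borel_measurable (lborel \<Otimes>\<^sub>M lborel)"
    unfolding P1_def P2_def by (rule borel_measurable_bounded_bilinear[OF h]; measurable)+
  have Q_split: "Q = (\<lambda>p. P1 p + P2 p)"
    by (auto simp: fun_eq_iff Q_def P1_def P2_def h.zero_left h.zero_right split: split_indicator)
  have P_int: "integrable (lborel \<Otimes>\<^sub>M lborel) P1" "integrable (lborel \<Otimes>\<^sub>M lborel) P2"
    by (rule Bochner_Integration.integrable_bound[OF Q_int P_meas(1)],
        force simp: Q_def P1_def h.zero_left indicator_def)
       (rule Bochner_Integration.integrable_bound[OF Q_int P_meas(2)],
        force simp: Q_def P2_def h.zero_right indicator_def)
  have inner_P1: "(LINT s|lborel. P1 (s, t)) = h (LINT s|lborel. indicator {..t} s *\<^sub>R f s) (g t)" for t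
    unfolding P1_def fst_conv snd_conv
    by (rule integral_bounded_linear[OF h.bounded_linear_left integrable_mult_indicator]) (auto intro: f)
  have inner_P2: "(LINT t|lborel. P2 (s, t)) = h (f s) (LINT t|lborel. indicator {..<s} t *\<^sub>R g t)" for s
    unfolding P2_def fst_conv snd_conv
    by (rule integral_bounded_linear[OF h.bounded_linear_right integrable_mult_indicator]) (auto intro: g)
  show "integrable lborel (\<lambda>t. h (LINT s|lborel. indicator {..t} s *\<^sub>R f s) (g t))"
    using lborel_pair.integrable_snd[of "\<lambda>s t. P1 (s, t)"] P_int(1) by (simp add: inner_P1)
  show "integrable lborel (\<lambda>s. h (f s) (LINT t|lborel. indicator {..<s} t *\<^sub>R g t))"
    using lborel_pair.integrable_fst[of "\<lambda>s t. P2 (s, t)"] P_int(2) by (simp add: inner_P2)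
  have "integral\<^sup>L (lborel \<Otimes>\<^sub>M lborel) Q = (LINT t|lborel. LINT s|lborel. Q (s, t))"
    using lborel_pair.integral_snd[of "\<lambda>s t. Q (s, t)"] Q_int by simp
  also have "\<dots> = (LINT t|lborel. h (LINT s|lborel. f s) (g t))"
    unfolding Q_def fst_conv snd_conv
    by (subst integral_bounded_linear[OF h.bounded_linear_left f]) rule
  also have "\<dots> = h (LINT s|lborel. f s) (LINT t|lborel. g t)"
    by (rule integral_bounded_linear[OF h.bounded_linear_right g])
  finally show "(LINT t|lborel. h (LINT s|lborel. indicator {..t} s *\<^sub>R f s) (g t))
       + (LINT s|lborel. h (f s) (LINT t|lborel. indicator {..<s} t *\<^sub>R g t))
       = h (LINT s|lborel. f s) (LINT t|lborel. g t)"
    using lborel_pair.integral_snd[of "\<lambda>s t. P1 (s, t)"]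
      lborel_pair.integral_fst[of "\<lambda>s t. P2 (s, t)"] P_int Bochner_Integration.integral_add[OF P_int]
    by (simp add: inner_P1 inner_P2 Q_split)
qed

lemma integral_indicator_primitive:
  fixes f F :: "real \<Rightarrow> 'a::euclidean_space"
  assumes f: "integrable lborel f" and f_out: "\<And>s. s \<notin> {a..b} \<Longrightarrow> f s = 0"
    and F: "\<And>x. x \<in> {a..b} \<Longrightarrow> (f has_integral (F x - F a)) {a..x}"
    and t: "t \<in> {a..b}"
  shows "(LINT s|lborel. indicator {..t} s *\<^sub>R f s) = F t - F a"
    and "(LINT s|lborel. indicator {..<t} s *\<^sub>R f s) = F t - F a"
proof -
  have [measurable]: "f \<in> borel_measurable lborel"
    using f by (rule borel_measurable_integrable)
  have "(LINT s|lborel. indicator {..t} s *\<^sub>R f s) = (LINT s:{a..t}|lborel. f s)"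
    unfolding set_lebesgue_integral_def
    by (rule Bochner_Integration.integral_cong) (use t f_out in \<open>auto simp: indicator_def\<close>)
  also have "\<dots> = F t - F a"
    using has_integral_unique[OF has_integral_set_borel_integral F[OF t]] f
    by (simp add: set_integrable_def integrable_mult_indicator)
  finally show "(LINT s|lborel. indicator {..t} s *\<^sub>R f s) = F t - F a" .
  moreover have "(LINT s|lborel. indicator {..<t} s *\<^sub>R f s) = (LINT s|lborel. indicator {..t} s *\<^sub>R f s)"
    by (rule integral_cong_AE)
       (use AE_lborel_singleton[of t] in \<open>auto simp: indicator_def elim!: eventually_mono\<close>)
  ultimately show "(LINT s|lborel. indicator {..<t} s *\<^sub>R f s) = F t - F a"
    by simp
qed

lemma integration_by_parts_bilinear:
  fixes h :: "'a::euclidean_space \<Rightarrow> 'b::euclidean_space \<Rightarrow> 'c::euclidean_space"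
    and F F' :: "real \<Rightarrow> 'a" and G G' :: "real \<Rightarrow> 'b"
  assumes h: "bounded_bilinear h" and "a \<le> b"
    and F': "set_integrable lborel {a..b} F'" and G': "set_integrable lborel {a..b} G'"
    and F: "\<And>x. x \<in> {a..b} \<Longrightarrow> (F' has_integral (F x - F a)) {a..x}"
    and G: "\<And>x. x \<in> {a..b} \<Longrightarrow> (G' has_integral (G x - G a)) {a..x}"
  shows "set_integrable lborel {a..b} (\<lambda>t. h (F' t) (G t) + h (F t) (G' t))"
    and "((\<lambda>t. h (F' t) (G t) + h (F t) (G' t)) has_integral (h (F b) (G b) - h (F a) (G a))) {a..b}"
proof -
  interpret h: bounded_bilinear h by (rule h)
  define f where "f t = indicator {a..b} t *\<^sub>R F' t" for t
  define g where "g t = indicator {a..b} t *\<^sub>R G' t" for t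
  have f_int: "integrable lborel f" and g_int: "integrable lborel g"
    using F' G' by (simp_all add: f_def[abs_def] g_def[abs_def] set_integrable_def)
  have f_prim: "(f has_integral (F x - F a)) {a..x}" and g_prim: "(g has_integral (G x - G a)) {a..x}"
    if "x \<in> {a..b}" for x
    using F[OF that] G[OF that] that
    by (auto simp: f_def g_def intro: has_integral_cong[THEN iffD1, rotated])
  have f_out: "f s = 0" and g_out: "g s = 0" if "s \<notin> {a..b}" for s
    using that by (simp_all add: f_def g_def)
  have F_eq: "(LINT s|lborel. indicator {..t} s *\<^sub>R f s) = F t - F a"
    and G_eq: "(LINT s|lborel. indicator {..<t} s *\<^sub>R g s) = G t - G a"
    and G_eq_atMost: "(LINT s|lborel. indicator {..t} s *\<^sub>R g s) = G t - G a"
    if "t \<in> {a..b}" for t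
    using f_int f_out f_prim g_int g_out g_prim that by (blast intro: integral_indicator_primitive)+
  have F_part: "h (LINT s|lborel. indicator {..t} s *\<^sub>R f s) (g t) = h (F t - F a) (g t)" for t
    by (cases "t \<in> {a..b}") (auto simp: F_eq g_out h.zero_right)
  have G_part: "h (f s) (LINT t|lborel. indicator {..<s} t *\<^sub>R g t) = h (f s) (G s - G a)" for s
    by (cases "s \<in> {a..b}") (auto simp: G_eq f_out h.zero_left)
  note split = integral_bilinear_split_diagonal[OF h f_int g_int, unfolded F_part G_part]
  have "indicator {..b} s *\<^sub>R f s = f s" "indicator {..b} s *\<^sub>R g s = g s" for s
    by (simp_all add: f_def g_def split: split_indicator)
  then have int_f: "(LINT t|lborel. f t) = F b - F a" and int_g: "(LINT t|lborel. g t) = G b - G a"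
    using F_eq[of b] G_eq_atMost[of b] \<open>a \<le> b\<close> by simp_all
  have eq: "indicator {a..b} t *\<^sub>R (h (F' t) (G t) + h (F t) (G' t))
      = h (f t) (G t - G a) + h (f t) (G a) + (h (F t - F a) (g t) + h (F a) (g t))" for t
    by (simp add: f_def g_def h.scaleR_left h.scaleR_right h.diff_left h.diff_right scaleR_add_right
        scaleR_diff_right)
  have int_left: "integrable lborel (\<lambda>t. h (f t) c)" for c
    by (rule integrable_bounded_linear[OF h.bounded_linear_left f_int])
  have int_right: "integrable lborel (\<lambda>t. h c (g t))" for c
    by (rule integrable_bounded_linear[OF h.bounded_linear_right g_int])
  show si: "set_integrable lborel {a..b} (\<lambda>t. h (F' t) (G t) + h (F t) (G' t))"
    unfolding set_integrable_def eq
    by (intro Bochner_Integration.integrable_add split(1,2) int_left int_right)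
  have "(LINT t:{a..b}|lborel. h (F' t) (G t) + h (F t) (G' t))
      = h (F b - F a) (G b - G a) + h (F b - F a) (G a) + h (F a) (G b - G a)"
    unfolding set_lebesgue_integral_def eq
    using split(3) integral_bounded_linear[OF h.bounded_linear_left f_int]
      integral_bounded_linear[OF h.bounded_linear_right g_int]
    by (simp add: Bochner_Integration.integral_add split(1,2) int_left int_right int_f int_g
        algebra_simps)
  also have "\<dots> = h (F b) (G b) - h (F a) (G a)"
    by (simp add: h.diff_left h.diff_right algebra_simps)
  finally show "((\<lambda>t. h (F' t) (G t) + h (F t) (G' t)) has_integral (h (F b) (G b) - h (F a) (G a))) {a..b}"
    using has_integral_set_borel_integral[OF si] by simp
qed

section \<open>Square integrable functions\<close>

lemma L2_on_cong:
  assumes "\<And>x. x \<in> S \<Longrightarrow> f x = g x"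
  shows "L2_on S f \<longleftrightarrow> L2_on S g"
proof -
  have "(\<lambda>x. indicator S x *\<^sub>R f x) = (\<lambda>x. indicator S x *\<^sub>R g x)"
    "(\<lambda>x. indicator S x *\<^sub>R (norm (f x))\<^sup>2) = (\<lambda>x. indicator S x *\<^sub>R (norm (g x))\<^sup>2)"
    using assms by (auto simp: fun_eq_iff split: split_indicator)
  then show ?thesis
    unfolding L2_on_def set_borel_measurable_def set_integrable_def by (simp only:)
qed

lemma set_borel_measurable_power2_norm:
  fixes g :: "real \<Rightarrow> 'a::euclidean_space"
  assumes "set_borel_measurable lborel S g"
  shows "set_borel_measurable lborel S (\<lambda>x. (norm (g x))\<^sup>2)"
proof -
  have [measurable]: "(\<lambda>x. indicator S x *\<^sub>R g x) \<in> borel_measurable lborel"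
    using assms unfolding set_borel_measurable_def .
  have eq: "(\<lambda>x. indicator S x *\<^sub>R (norm (g x))\<^sup>2) = (\<lambda>x. (norm (indicator S x *\<^sub>R g x))\<^sup>2)"
    by (simp add: fun_eq_iff split: split_indicator)
  show ?thesis
    unfolding set_borel_measurable_def eq by measurable
qed

lemma L2_on_subset:
  assumes "L2_on S f" "T \<in> sets lborel" "T \<subseteq> S"
  shows "L2_on T f"
  using assms set_borel_measurable_subset set_integrable_subset unfolding L2_on_def by metis

lemma L2_on_bound:
  fixes f :: "real \<Rightarrow> 'a::euclidean_space" and g :: "real \<Rightarrow> 'b::euclidean_space"
  assumes "set_integrable lborel S B" "set_borel_measurable lborel S g"
    and "\<And>x. x \<in> S \<Longrightarrow> (norm (g x))\<^sup>2 \<le> B x"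
  shows "L2_on S g"
  unfolding L2_on_def
proof
  show "set_borel_measurable lborel S g" by (rule assms(2))
  have "norm ((norm (g x))\<^sup>2) \<le> norm (B x)" if "x \<in> S" for x
    using assms(3)[OF that] abs_ge_self[of "B x"] by simp
  then show "set_integrable lborel S (\<lambda>x. (norm (g x))\<^sup>2)"
    by (intro set_integrable_bound[OF assms(1) set_borel_measurable_power2_norm[OF assms(2)]] AE_I2)
       simp
qed

lemma L2_on_add:
  fixes f g :: "real \<Rightarrow> 'a::euclidean_space"
  assumes f: "L2_on S f" and g: "L2_on S g"
  shows "L2_on S (\<lambda>x. f x + g x)"
proof (rule L2_on_bound)
  show "set_integrable lborel S (\<lambda>x. 2 * (norm (f x))\<^sup>2 + 2 * (norm (g x))\<^sup>2)"
    using f g unfolding L2_on_def by (intro set_integral_add(1) set_integrable_mult_right) auto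
  show "set_borel_measurable lborel S (\<lambda>x. f x + g x)"
    using f g unfolding L2_on_def set_borel_measurable_def
    by (simp add: scaleR_add_right borel_measurable_add)
  show "(norm (f x + g x))\<^sup>2 \<le> 2 * (norm (f x))\<^sup>2 + 2 * (norm (g x))\<^sup>2" for x
  proof -
    have "(norm (f x + g x))\<^sup>2 \<le> (norm (f x) + norm (g x))\<^sup>2"
      by (simp add: power_mono norm_triangle_ineq)
    also have "\<dots> \<le> 2 * (norm (f x))\<^sup>2 + 2 * (norm (g x))\<^sup>2"
      using sum_squares_ge_zero[of "norm (f x) - norm (g x)" 0] by (simp add: power2_eq_square algebra_simps)
    finally show ?thesis .
  qed
qed

lemma L2_on_bounded_linear:
  fixes f :: "real \<Rightarrow> 'a::euclidean_space" and T :: "'a \<Rightarrow> 'b::euclidean_space"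
  assumes T: "bounded_linear T" and f: "L2_on S f"
  shows "L2_on S (\<lambda>x. T (f x))"
proof -
  interpret T: bounded_linear T by (rule T)
  obtain K where K: "\<And>x. norm (T x) \<le> norm x * K" and "K > 0"
    using T.pos_bounded by blast
  show ?thesis
  proof (rule L2_on_bound)
    show "set_integrable lborel S (\<lambda>x. K\<^sup>2 * (norm (f x))\<^sup>2)"
      using f unfolding L2_on_def by auto
    have "(\<lambda>x. T (indicator S x *\<^sub>R f x)) \<in> borel_measurable lborel"
      using f unfolding L2_on_def set_borel_measurable_def
      by (intro measurable_compose[OF _ borel_measurable_continuous_onI[OF linear_continuous_on[OF T]]])
         simp
    then show "set_borel_measurable lborel S (\<lambda>x. T (f x))"
      by (simp add: set_borel_measurable_def T.scaleR)
    show "(norm (T (f x)))\<^sup>2 \<le> K\<^sup>2 * (norm (f x))\<^sup>2" for x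
      using power_mono[OF K[of "f x"]] by (simp add: power_mult_distrib mult.commute)
  qed
qed

lemma L2_on_Ioi_imp_set_integrable:
  fixes f :: "real \<Rightarrow> 'a::euclidean_space"
  assumes "L2_on {0<..} f"
  shows "set_integrable lborel {0..b} f"
proof -
  have "set_integrable lborel {0<..b} (\<lambda>x. 1 :: real)"
    by (rule set_integrable_subset[OF borel_integrable_atLeastAtMost'[of 0 b]]) auto
  moreover have "set_integrable lborel {0<..b} (\<lambda>x. (norm (f x))\<^sup>2)"
    using assms unfolding L2_on_def by (auto intro: set_integrable_subset[of _ "{0<..}"])
  ultimately have int: "set_integrable lborel {0<..b} (\<lambda>x. 1 + (norm (f x))\<^sup>2)"
    by (rule set_integral_add(1))
  have meas: "set_borel_measurable lborel {0<..b} f"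
    using assms unfolding L2_on_def by (auto intro: set_borel_measurable_subset[of _ "{0<..}"])
  have "norm (f x) \<le> norm (1 + (norm (f x))\<^sup>2)" for x
  proof -
    have "2 * norm (f x) \<le> (norm (f x))\<^sup>2 + 1"
      using zero_le_power2[of "norm (f x) - 1"] by (simp add: power2_diff)
    then have "norm (f x) \<le> 1 + (norm (f x))\<^sup>2"
      using norm_ge_zero[of "f x"] by linarith
    then show ?thesis
      by simp
  qed
  then have "set_integrable lborel {0<..b} f"
    by (intro set_integrable_bound[OF int meas] AE_I2) simp
  then have "set_integrable lborel (insert 0 {0<..b}) f"
    by (rule set_integrable_lborel_insert) simp
  then show ?thesis
    by (rule set_integrable_subset) auto
qed

lemma L2_on_Ioi_continuous_tail:
  fixes g :: "real \<Rightarrow> 'a::euclidean_space"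
  assumes cont: "\<And>b. continuous_on {0..b} g" and "a \<ge> 0" and tail: "L2_on {a<..} g"
  shows "L2_on {0<..} g"
proof -
  have "isCont g x" if "x > 0" for x
    using continuous_on_interior[OF cont[of "x + 1"]] that by (simp add: interior_atLeastAtMost_real)
  then have "continuous_on {0<..} g"
    by (simp add: continuous_at_imp_continuous_on)
  then have meas: "set_borel_measurable lborel {0<..} g"
    unfolding set_borel_measurable_def
    using borel_measurable_continuous_on_indicator[of "{0<..}" g] by (simp add: measurable_lborel1)
  have "set_integrable lborel {0..a} (\<lambda>x. (norm (g x))\<^sup>2)"
    by (intro borel_integrable_atLeastAtMost' continuous_intros cont)
  then have "set_integrable lborel {0<..a} (\<lambda>x. (norm (g x))\<^sup>2)"
    by (rule set_integrable_subset) auto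
  moreover have "set_integrable lborel {a<..} (\<lambda>x. (norm (g x))\<^sup>2)"
    using tail by (simp add: L2_on_def)
  ultimately have "set_integrable lborel ({0<..a} \<union> {a<..}) (\<lambda>x. (norm (g x))\<^sup>2)"
    by (rule set_integrable_Un) auto
  moreover have "{0<..a} \<union> {a<..} = {0<..}"
    using \<open>a \<ge> 0\<close> by auto
  ultimately show ?thesis
    using meas by (simp add: L2_on_def)
qed

section \<open>The matrices of the Dirac system\<close>

lemma bounded_bilinear_matrix_matrix_mult:
  "bounded_bilinear ((**) :: 'a::{euclidean_space, real_algebra_1}^'n^'m \<Rightarrow> 'a^'k^'n \<Rightarrow> 'a^'k^'m)"
  unfolding bilinear_conv_bounded_bilinear[symmetric] bilinear_def linear_iff
  by (simp add: vec_eq_iff matrix_matrix_mult_def scaleR_sum_right sum_distrib_left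
      sum_distrib_right distrib_left distrib_right sum.distrib)

lemma bounded_bilinear_matrix_vector_mult:
  "bounded_bilinear ((*v) :: 'a::{euclidean_space, real_algebra_1}^'n^'m \<Rightarrow> 'a^'n \<Rightarrow> 'a^'m)"
  unfolding bilinear_conv_bounded_bilinear[symmetric] bilinear_def linear_iff
  by (simp add: vec_eq_iff matrix_vector_mult_def scaleR_sum_right sum_distrib_left
      distrib_left distrib_right sum.distrib)

lemma matrix_inv_unique:
  fixes A :: "'a::field^'n::finite^'n"
  assumes "A ** B = mat 1" "B ** A = mat 1"
  shows "matrix_inv A = B"
proof -
  have inv: "A ** matrix_inv A = mat 1 \<and> matrix_inv A ** A = mat 1"
    unfolding matrix_inv_def by (rule someI[of _ B]) (use assms in simp)
  then have "matrix_inv A = matrix_inv A ** (A ** B)"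
    by (simp add: assms)
  also have "\<dots> = B"
    by (simp add: matrix_mul_assoc inv)
  finally show ?thesis .
qed

lemma matrix_vector_mult_smult: "M *v (c *s x) = c *s (M *v (x :: 'a::comm_semiring_1^'n::finite))"
  by (simp add: vec_eq_iff matrix_vector_mult_def sum_distrib_left mult.left_commute)

lemma sum_UNIV_Plus:
  "(\<Sum>k\<in>(UNIV::('a::finite + 'b::finite) set). g k) = (\<Sum>k\<in>UNIV. g (Inl k)) + (\<Sum>k\<in>UNIV. g (Inr k))"
  by (simp add: UNIV_Plus_UNIV[symmetric] sum.Plus comp_def del: UNIV_Plus_UNIV)

lemma if_zero_mult: "(if P then a else 0) * b = (if P then a * b else (0::'a::mult_zero))"
  by simp

lemma mult_if_zero: "b * (if P then a else 0) = (if P then b * a else (0::'a::mult_zero))"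
  by simp

lemma mat_entry: "mat c $ i $ j = (if i = j then c else 0)"
  by (simp add: mat_def)

lemma mat_mult_entry: "(mat c ** M) $ i $ j = c * M $ i $ j"
  by (simp add: matrix_matrix_mult_def mat_entry if_distrib if_distribR cong: if_cong)

lemma mat_mult_vec: "mat c *v x = c *s (x :: 'a::comm_semiring_1^'n::finite)"
  by (simp add: vec_eq_iff matrix_vector_mult_def mat_entry if_distrib if_distribR cong: if_cong)

definition jsign :: "'m1::finite + 'm2::finite \<Rightarrow> complex" where
  "jsign i = (case i of Inl _ \<Rightarrow> 1 | Inr _ \<Rightarrow> -1)"

definition cnj_transpose :: "complex^'n::finite^'m::finite \<Rightarrow> complex^'m^'n" where
  "cnj_transpose M = (\<chi> i j. cnj (M $ j $ i))"

definition Jform :: "complex^('m1::finite + 'm2::finite) \<Rightarrow> complex^('m1 + 'm2) \<Rightarrow> complex" where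
  "Jform x y = (\<Sum>i\<in>UNIV. cnj (x $ i) * jsign i * y $ i)"

lemma jsign_simps [simp]:
  "jsign (Inl p) = 1" "jsign (Inr q) = -1" "jsign i * jsign i = 1" "jsign i * (jsign i * x) = x"
  "cnj (jsign i) = jsign i"
  by (simp_all add: jsign_def mult.assoc[symmetric] split: sum.split)

lemma Jmat_entry: "Jmat $ i $ j = (if i = j then jsign i else 0)"
  by (simp add: Jmat_def jsign_def)

lemma Jmat_mult_entry: "(Jmat ** M) $ i $ j = jsign i * M $ i $ j"
  by (simp add: matrix_matrix_mult_def Jmat_entry if_distrib if_distribR cong: if_cong)

lemma mult_Jmat_entry: "(M ** Jmat) $ i $ j = M $ i $ j * jsign j"
  by (simp add: matrix_matrix_mult_def Jmat_entry if_distrib if_distribR cong: if_cong)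

lemma Jmat_mult_vec_entry: "(Jmat *v x) $ i = jsign i * x $ i"
  by (simp add: matrix_vector_mult_def Jmat_entry if_distrib if_distribR cong: if_cong)

lemma Jmat_mult_Jmat: "Jmat ** Jmat = mat 1"
  by (simp add: vec_eq_iff Jmat_mult_entry Jmat_entry mat_entry)

lemma Vmat_hermitian: "cnj (Vmat B $ j $ i) = Vmat B $ i $ j"
  by (simp add: Vmat_def split: sum.split)

lemma Dcoef_entry:
  "Dcoef v z t $ i $ j = \<i> * (z * (if i = j then jsign i else 0) + jsign i * Vmat (v t) $ i $ j)"
  by (simp add: Dcoef_def mat_mult_entry Jmat_mult_entry mult_Jmat_entry Jmat_entry mat_entry
      matrix_add_ldistrib distrib_left)

lemma Dcoef_mult_vec_entry:
  "(Dcoef v z t *v y) $ i = \<i> * (z * jsign i * y $ i + jsign i * (Vmat (v t) *v y) $ i)"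
  by (simp add: matrix_vector_mult_def Dcoef_entry if_zero_mult mult_if_zero distrib_left
      distrib_right sum.distrib sum_distrib_left mult.assoc)

lemma cnj_transpose_entry [simp]: "cnj_transpose M $ i $ j = cnj (M $ j $ i)"
  by (simp add: cnj_transpose_def)

lemma cnj_transpose_mult: "cnj_transpose (M ** N) = cnj_transpose N ** cnj_transpose M"
  by (simp add: vec_eq_iff matrix_matrix_mult_def mult.commute)

lemma cnj_transpose_mat: "cnj_transpose (mat c) = mat (cnj c)"
  by (simp add: vec_eq_iff mat_entry)

lemma Dcoef_J_skew: "cnj_transpose (Dcoef v (cnj z) t) ** Jmat + Jmat ** Dcoef v z t = 0"
  by (simp add: vec_eq_iff Jmat_mult_entry mult_Jmat_entry Dcoef_entry Vmat_hermitian
      algebra_simps)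

lemma Lexpr_eq_iff:
  "(- \<i>) *s (Jmat *v d) - Vmat (v t) *v y = z *s y + w \<longleftrightarrow> d = Dcoef v z t *v y + \<i> *s (Jmat *v w)"
proof -
  have "(- \<i>) *s (Jmat *v d) - Vmat (v t) *v y = z *s y + w \<longleftrightarrow>
    (\<forall>i. - \<i> * (jsign i * d $ i) - (Vmat (v t) *v y) $ i = z * y $ i + w $ i)"
    by (simp add: vec_eq_iff Jmat_mult_vec_entry)
  also have "\<dots> \<longleftrightarrow> (\<forall>i. d $ i = \<i> * (z * jsign i * y $ i + jsign i * (Vmat (v t) *v y) $ i) + \<i> * (jsign i * w $ i))"
  proof (intro iff_allI iffI)
    fix i
    assume "- \<i> * (jsign i * d $ i) - (Vmat (v t) *v y) $ i = z * y $ i + w $ i"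
    then have "(\<i> * jsign i) * (- \<i> * (jsign i * d $ i)) = (\<i> * jsign i) * (z * y $ i + w $ i + (Vmat (v t) *v y) $ i)"
      by (simp add: algebra_simps)
    then show "d $ i = \<i> * (z * jsign i * y $ i + jsign i * (Vmat (v t) *v y) $ i) + \<i> * (jsign i * w $ i)"
      by (simp add: algebra_simps)
  qed (simp add: algebra_simps)
  also have "\<dots> \<longleftrightarrow> d = Dcoef v z t *v y + \<i> *s (Jmat *v w)"
    by (simp add: vec_eq_iff Dcoef_mult_vec_entry Jmat_mult_vec_entry)
  finally show ?thesis .
qed

lemma Qmat_entry [simp]:
  "Qmat P $ Inl p $ Inl p' = (if p = p' then 1 else 0)"
  "Qmat P $ Inl p $ Inr q = 0"
  "Qmat P $ Inr q $ Inl p = P $ q $ p"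
  "Qmat P $ Inr q $ Inr q' = (if q = q' then 1 else 0)"
  by (simp_all add: Qmat_def)

lemma IPhi_entry [simp]:
  "IPhi P $ Inl p $ p' = (if p = p' then 1 else 0)"
  "IPhi P $ Inr q $ p = P $ q $ p"
  by (simp_all add: IPhi_def)

lemma mat_Plus_entry [simp]:
  "mat c $ Inl p $ Inl p' = (if p = p' then c else 0)"
  "mat c $ Inl p $ Inr q = 0"
  "mat c $ Inr q $ Inl p = 0"
  "mat c $ Inr q $ Inr q' = (if q = q' then c else 0)"
  by (simp_all add: mat_entry)

lemma Qmat_mult_Qmat_uminus: "Qmat P ** Qmat (- P) = mat 1" "Qmat (- P) ** Qmat P = mat 1"
  by (simp_all add: vec_eq_iff matrix_matrix_mult_def sum_UNIV_Plus if_zero_mult mult_if_zero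
      split_sum_all sum_negf)

lemma Qmat_mult_vec_Inl: "(Qmat P *v g) $ Inl p = g $ Inl p"
  by (simp add: matrix_vector_mult_def sum_UNIV_Plus if_zero_mult)

lemma Qmat_mult_vec_upper:
  assumes "\<forall>q. c $ Inr q = 0"
  shows "Qmat P *v c = IPhi P *v (\<chi> p. c $ Inl p)"
  using assms by (simp add: vec_eq_iff matrix_vector_mult_def sum_UNIV_Plus if_zero_mult split_sum_all)

lemma bounded_linear_Vmat: "bounded_linear Vmat"
  unfolding linear_conv_bounded_linear[symmetric] linear_iff
  by (auto simp: vec_eq_iff Vmat_def scaleR_conv_of_real[where 'a = complex] vector_scaleR_component split: sum.split)

lemma bounded_linear_cnj_transpose: "bounded_linear cnj_transpose"
  unfolding linear_conv_bounded_linear[symmetric] linear_iff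
  by (simp add: vec_eq_iff scaleR_conv_of_real[where 'a = complex] vector_scaleR_component)

lemma bounded_bilinear_Jform: "bounded_bilinear Jform"
  unfolding bilinear_conv_bounded_bilinear[symmetric] bilinear_def linear_iff Jform_def
  by (simp add: scaleR_conv_of_real[where 'a = complex] vector_scaleR_component sum_distrib_left algebra_simps sum.distrib)

lemma bounded_bilinear_cnj_transpose_Jmat:
  "bounded_bilinear (\<lambda>M N. cnj_transpose M ** Jmat ** (N :: complex^'n::finite^('m1::finite + 'm2::finite)))"
  unfolding bilinear_conv_bounded_bilinear[symmetric] bilinear_def linear_iff
  by (simp add: vec_eq_iff matrix_matrix_mult_def mult_Jmat_entry scaleR_conv_of_real[where 'a = complex] vector_scaleR_component
      sum_distrib_left sum_distrib_right algebra_simps sum.distrib)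

lemma Jform_self: "Jform y y = (\<Sum>i\<in>UNIV. jsign i * of_real ((norm (y $ i))\<^sup>2))"
  by (simp add: Jform_def complex_norm_square mult_ac del: of_real_power)

lemma Jform_Dcoef:
  "Jform (Dcoef v z t *v y) y + Jform y (Dcoef v z t *v y) = of_real (- 2 * Im z * (norm y)\<^sup>2)"
proof -
  define s where "s = (\<Sum>i\<in>UNIV. cnj (y $ i) * (Vmat (v t) *v y) $ i)"
  have "cnj s = (\<Sum>i\<in>UNIV. \<Sum>j\<in>UNIV. y $ i * (Vmat (v t) $ j $ i * cnj (y $ j)))"
    by (simp add: s_def matrix_vector_mult_def sum_distrib_left Vmat_hermitian)
  also have "\<dots> = s"
    by (subst sum.swap) (simp add: s_def matrix_vector_mult_def sum_distrib_left algebra_simps)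
  finally have s_real: "cnj s = s" .
  have norm2: "(\<Sum>i\<in>UNIV. cnj (y $ i) * y $ i) = of_real ((norm y)\<^sup>2)"
    by (simp add: norm_vec_def L2_set_def sum_nonneg complex_norm_square mult.commute del: of_real_power)
  have J1: "Jform (Dcoef v z t *v y) y = - \<i> * cnj z * (\<Sum>i\<in>UNIV. cnj (y $ i) * y $ i) - \<i> * cnj s"
    by (simp add: Jform_def Dcoef_mult_vec_entry s_def sum_distrib_left sum_subtractf
        algebra_simps sum.distrib)
  have J2: "Jform y (Dcoef v z t *v y) = \<i> * z * (\<Sum>i\<in>UNIV. cnj (y $ i) * y $ i) + \<i> * s"
    by (simp add: Jform_def Dcoef_mult_vec_entry s_def sum_distrib_left algebra_simps sum.distrib)
  have "Jform (Dcoef v z t *v y) y + Jform y (Dcoef v z t *v y) = \<i> * (z - cnj z) * of_real ((norm y)\<^sup>2)"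
    unfolding J1 J2 norm2 s_real by (simp add: algebra_simps)
  also have "\<i> * (z - cnj z) = of_real (- 2 * Im z)"
    by (simp add: complex_eq_iff)
  finally show ?thesis
    by simp
qed

lemma Re_Jform_self_ge: "- (norm y)\<^sup>2 \<le> Re (Jform y y)"
proof -
  have "- ((norm (y $ i))\<^sup>2) \<le> Re (jsign i) * (norm (y $ i))\<^sup>2" for i
    by (cases i) simp_all
  then have "(\<Sum>i\<in>UNIV. - ((norm (y $ i))\<^sup>2)) \<le> (\<Sum>i\<in>UNIV. Re (jsign i) * (norm (y $ i))\<^sup>2)"
    by (rule sum_mono)
  then show ?thesis
    by (simp add: Jform_self Re_sum norm_vec_def L2_set_def sum_nonneg sum_negf)
qed

lemma Re_Jform_self_nonpos:
  assumes "\<forall>p. y $ Inl p = 0"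
  shows "Re (Jform y y) \<le> 0"
  using assms by (simp add: Jform_self Re_sum sum_UNIV_Plus sum_nonpos)

section \<open>The fundamental solution\<close>

(* w(x, z)^-1, from the J-unitarity of u (fund_sol_inverse) and Q(phi)^-1 = Q(-phi). *)
definition wfun_inv :: "(real \<Rightarrow> complex \<Rightarrow> complex ^ ('m1::finite + 'm2::finite) ^ ('m1 + 'm2))
    \<Rightarrow> (complex \<Rightarrow> complex ^ 'm1 ^ 'm2) \<Rightarrow> real \<Rightarrow> complex \<Rightarrow> complex ^ ('m1 + 'm2) ^ ('m1 + 'm2)"
  where "wfun_inv u \<phi> x z = Qmat (- \<phi> z) ** (Jmat ** cnj_transpose (u x (cnj z)) ** Jmat)"

context
  fixes v :: "real \<Rightarrow> complex ^ 'm2::finite ^ 'm1::finite"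
    and u :: "real \<Rightarrow> complex \<Rightarrow> complex ^ ('m1 + 'm2) ^ ('m1 + 'm2)"
  assumes v_loc: "\<forall>b\<ge>0. set_integrable lborel {0..b} v"
    and u_fund: "fund_sol v u"
begin

lemma set_integrable_Dcoef:
  assumes "b \<ge> 0"
  shows "set_integrable lborel {0..b} (Dcoef v z)"
proof -
  have "bounded_linear (\<lambda>B. mat \<i> ** (Jmat ** Vmat B) :: complex^('m1 + 'm2)^('m1 + 'm2))"
    using bounded_bilinear.bounded_linear_right[OF bounded_bilinear_matrix_matrix_mult]
    by (intro bounded_linear_compose[OF _ bounded_linear_compose[OF _ bounded_linear_Vmat]])
  then have "set_integrable lborel {0..b} (\<lambda>t. mat \<i> ** (mat z ** Jmat) + mat \<i> ** (Jmat ** Vmat (v t)))"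
    using v_loc assms
    by (intro set_integral_add(1)[OF borel_integrable_atLeastAtMost'[OF continuous_on_const]
          set_integrable_bounded_linear]) auto
  then show ?thesis
    by (simp add: Dcoef_def[abs_def] matrix_add_ldistrib)
qed

lemma fund_sol_has_integral:
  "x \<ge> 0 \<Longrightarrow> ((\<lambda>t. Dcoef v z t ** u t z) has_integral (u x z - mat 1)) {0..x}"
  using u_fund by (simp add: fund_sol_def)

lemma fund_sol_0: "u 0 z = mat 1"
proof -
  have "((\<lambda>t. Dcoef v z t ** u t z) has_integral (u 0 z - mat 1)) {0}"
    using fund_sol_has_integral[of 0 z] by simp
  from has_integral_unique[OF this has_integral_refl(2)] show ?thesis
    by simp
qed

lemma continuous_on_fund_sol: "continuous_on {0..b} (\<lambda>x. u x z)"
  by (rule has_integral_primitive_continuous_on[where f = "\<lambda>t. Dcoef v z t ** u t z"])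
     (simp add: fund_sol_has_integral fund_sol_0)

lemma set_integrable_Dcoef_fund_sol:
  "b \<ge> 0 \<Longrightarrow> set_integrable lborel {0..b} (\<lambda>t. Dcoef v z t ** u t z)"
  using set_integrable_bilinear_continuous[OF bounded_bilinear.flip[OF bounded_bilinear_matrix_matrix_mult]
      set_integrable_Dcoef continuous_on_fund_sol] .

lemma fund_sol_J_unitary:
  assumes "x \<ge> 0"
  shows "cnj_transpose (u x (cnj z)) ** Jmat ** u x z = Jmat"
proof -
  have "((\<lambda>t. cnj_transpose (Dcoef v (cnj z) t ** u t (cnj z)) ** Jmat ** u t z
          + cnj_transpose (u t (cnj z)) ** Jmat ** (Dcoef v z t ** u t z))
        has_integral (cnj_transpose (u x (cnj z)) ** Jmat ** u x z
          - cnj_transpose (u 0 (cnj z)) ** Jmat ** u 0 z)) {0..x}"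
    by (rule integration_by_parts_bilinear(2)[OF bounded_bilinear_cnj_transpose_Jmat assms
          set_integrable_Dcoef_fund_sol[OF assms] set_integrable_Dcoef_fund_sol[OF assms]])
       (simp_all add: fund_sol_has_integral fund_sol_0)
  moreover have "cnj_transpose (Dcoef v (cnj z) t ** u t (cnj z)) ** Jmat ** u t z
      + cnj_transpose (u t (cnj z)) ** Jmat ** (Dcoef v z t ** u t z) = 0" for t
  proof -
    have "cnj_transpose (Dcoef v (cnj z) t ** u t (cnj z)) ** Jmat ** u t z
        + cnj_transpose (u t (cnj z)) ** Jmat ** (Dcoef v z t ** u t z)
      = cnj_transpose (u t (cnj z))
          ** ((cnj_transpose (Dcoef v (cnj z) t) ** Jmat + Jmat ** Dcoef v z t) ** u t z)"
      by (simp add: cnj_transpose_mult matrix_mul_assoc matrix_add_ldistrib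
          bounded_bilinear.add_left[OF bounded_bilinear_matrix_matrix_mult])
    then show ?thesis
      by (simp add: Dcoef_J_skew)
  qed
  ultimately show ?thesis
    using has_integral_unique[OF _ has_integral_0] by (simp add: fund_sol_0 cnj_transpose_mat)
qed

lemma fund_sol_inverse:
  assumes "x \<ge> 0"
  shows "(Jmat ** cnj_transpose (u x (cnj z)) ** Jmat) ** u x z = mat 1"
    and "u x z ** (Jmat ** cnj_transpose (u x (cnj z)) ** Jmat) = mat 1"
proof -
  show left: "(Jmat ** cnj_transpose (u x (cnj z)) ** Jmat) ** u x z = mat 1"
    using fund_sol_J_unitary[OF assms, of z]
    by (simp add: matrix_mul_assoc[symmetric] Jmat_mult_Jmat)
  then show "u x z ** (Jmat ** cnj_transpose (u x (cnj z)) ** Jmat) = mat 1"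
    by (simp add: matrix_left_right_inverse)
qed


lemma wfun_mult_wfun_inv:
  assumes "x \<ge> 0"
  shows "wfun u \<phi> x z ** wfun_inv u \<phi> x z = mat 1"
    and "wfun_inv u \<phi> x z ** wfun u \<phi> x z = mat 1"
proof -
  note inv = fund_sol_inverse[OF assms, of z]
  have "wfun u \<phi> x z ** wfun_inv u \<phi> x z
      = u x z ** (Qmat (\<phi> z) ** Qmat (- \<phi> z)) ** (Jmat ** cnj_transpose (u x (cnj z)) ** Jmat)"
    by (simp add: wfun_def wfun_inv_def matrix_mul_assoc)
  then show "wfun u \<phi> x z ** wfun_inv u \<phi> x z = mat 1"
    using inv(2) by (simp add: Qmat_mult_Qmat_uminus)
  have "wfun_inv u \<phi> x z ** wfun u \<phi> x z
      = Qmat (- \<phi> z) ** ((Jmat ** cnj_transpose (u x (cnj z)) ** Jmat) ** u x z) ** Qmat (\<phi> z)"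
    by (simp add: wfun_def wfun_inv_def matrix_mul_assoc)
  then show "wfun_inv u \<phi> x z ** wfun u \<phi> x z = mat 1"
    using inv(1) by (simp add: Qmat_mult_Qmat_uminus)
qed

lemma continuous_on_wfun_inv: "continuous_on {0..b} (\<lambda>x. wfun_inv u \<phi> x z)"
  unfolding wfun_inv_def
  by (intro bounded_bilinear.continuous_on[OF bounded_bilinear_matrix_matrix_mult] continuous_on_const
      bounded_linear.continuous_on[OF bounded_linear_cnj_transpose]
      continuous_on_fund_sol)

end


section \<open>Uniqueness\<close>

lemma primitive_eq_0_if_dominates_primitive:
  fixes N :: "real \<Rightarrow> real"
  assumes nonneg: "\<And>t. 0 \<le> N t" and int: "set_integrable lborel {0..} N" and "c > 0"
    and dom: "\<And>x. x \<ge> 0 \<Longrightarrow> c * (LINT t:{0..x}|lborel. N t) \<le> N x"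
    and "x \<ge> 0"
  shows "(LINT t:{0..x}|lborel. N t) = 0"
proof (rule ccontr)
  have int_Icc: "set_integrable lborel {x..y} N" if "x \<ge> 0" for x y
    by (rule set_integrable_subset[OF int]) (use that in auto)
  have mono: "(LINT t:A|lborel. N t) \<le> (LINT t:B|lborel. N t)"
    if "A \<subseteq> B" "set_integrable lborel A N" "set_integrable lborel B N" for A B
    unfolding set_lebesgue_integral_def using that
    by (intro integral_mono) (auto simp: set_integrable_def nonneg split: split_indicator)
  define d where "d = c * (LINT t:{0..x}|lborel. N t)"
  define I where "I = (LINT t:{0..}|lborel. N t)"
  define M where "M = I / d + 1"
  assume "(LINT t:{0..x}|lborel. N t) \<noteq> 0"
  then have "d > 0" "I \<ge> 0"
    using \<open>c > 0\<close> nonneg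
    by (auto simp: d_def I_def set_lebesgue_integral_def integral_nonneg_AE less_le)
  then have "M > 0"
    unfolding M_def by (smt (verit) divide_nonneg_pos)
  have "d \<le> N t" if "t \<ge> x" for t
  proof -
    have "(LINT s:{0..x}|lborel. N s) \<le> (LINT s:{0..t}|lborel. N s)"
      using that by (intro mono int_Icc) auto
    then show ?thesis
      using dom[of t] that \<open>x \<ge> 0\<close> \<open>c > 0\<close> unfolding d_def by (smt (verit) mult_left_mono)
  qed
  then have "(LINT t:{x..x+M}|lborel. d) \<le> (LINT t:{x..x+M}|lborel. N t)"
    by (rule set_integral_mono[OF borel_integrable_atLeastAtMost'[OF continuous_on_const]
          int_Icc[OF \<open>x \<ge> 0\<close>]]) auto
  also have "\<dots> \<le> I"
    unfolding I_def using \<open>x \<ge> 0\<close> by (intro mono int_Icc int) auto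
  finally have "d * M \<le> I"
    using \<open>M > 0\<close> by (simp add: set_integral_const mult.commute)
  moreover have "d * M = I + d"
    using \<open>d > 0\<close> by (simp add: M_def field_simps)
  ultimately show False
    using \<open>d > 0\<close> by simp
qed

lemma AE_zero_if_dominates_primitive:
  fixes N :: "real \<Rightarrow> real"
  assumes nonneg: "\<And>t. 0 \<le> N t" and int: "set_integrable lborel {0..} N" and "c > 0"
    and dom: "\<And>x. x \<ge> 0 \<Longrightarrow> c * (LINT t:{0..x}|lborel. N t) \<le> N x"
  shows "AE x in lborel. x \<ge> 0 \<longrightarrow> N x = 0"
proof -
  have "AE t in lborel. t \<in> {0..real n} \<longrightarrow> N t = 0" for n :: nat
  proof -
    have "set_integrable lborel {0..real n} N"
      by (rule set_integrable_subset[OF int]) auto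
    then have "AE t in lborel. indicator {0..real n} t *\<^sub>R N t = 0"
      using primitive_eq_0_if_dominates_primitive[OF nonneg int \<open>c > 0\<close> dom, of "real n"]
      by (subst integral_nonneg_eq_0_iff_AE[symmetric])
         (simp_all add: set_integrable_def set_lebesgue_integral_def nonneg)
    then show ?thesis
      by eventually_elim (auto simp: indicator_def)
  qed
  then have "AE t in lborel. \<forall>n::nat. t \<in> {0..real n} \<longrightarrow> N t = 0"
    unfolding AE_all_countable by blast
  then show ?thesis
    by eventually_elim (metis atLeastAtMost_iff real_nat_ceiling_ge)
qed

(* Integrates (D^* J D)' = -2 Im z |D|^2 (Jform_Dcoef) from 0 to x. *)
lemma homogeneous_energy_bound:
  fixes D D' :: "real \<Rightarrow> complex^('m1::finite + 'm2::finite)"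
  assumes "0 \<le> x"
    and D': "set_integrable lborel {0..x} D'"
    and D: "\<And>y. y \<in> {0..x} \<Longrightarrow> (D' has_integral (D y - D 0)) {0..y}"
    and eq: "AE t in lborel. t > 0 \<longrightarrow> D' t = Dcoef v z t *v D t"
    and bc: "\<forall>p. D 0 $ Inl p = 0"
  shows "2 * Im z * (LINT t:{0..x}|lborel. (norm (D t))\<^sup>2) \<le> (norm (D x))\<^sup>2"
proof -
  define N where "N t = (norm (D t))\<^sup>2" for t
  have N_int: "set_integrable lborel {0..x} N"
    unfolding N_def using has_integral_primitive_continuous_on[OF D]
    by (intro borel_integrable_atLeastAtMost' continuous_intros)
  note ibp = integration_by_parts_bilinear[OF bounded_bilinear_Jform \<open>0 \<le> x\<close> D' D' D D]
  have "Jform (D x) (D x) - Jform (D 0) (D 0)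
      = (LINT t:{0..x}|lborel. Jform (D' t) (D t) + Jform (D t) (D' t))"
    using has_integral_unique[OF ibp(2) has_integral_set_borel_integral[OF ibp(1)]] .
  also have "\<dots> = (LINT t:{0..x}|lborel. complex_of_real (- 2 * Im z * N t))"
    unfolding set_lebesgue_integral_def
  proof (rule integral_cong_AE)
    show "(\<lambda>t. indicator {0..x} t *\<^sub>R (Jform (D' t) (D t) + Jform (D t) (D' t))) \<in> borel_measurable lborel"
      using ibp(1) unfolding set_integrable_def by (rule borel_measurable_integrable)
    have "set_integrable lborel {0..x} (\<lambda>t. complex_of_real (- 2 * Im z * N t))"
      by (intro set_integrable_bounded_linear[OF bounded_linear_of_real] set_integrable_mult_right N_int)
    then show "(\<lambda>t. indicator {0..x} t *\<^sub>R complex_of_real (- 2 * Im z * N t)) \<in> borel_measurable lborel"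
      unfolding set_integrable_def by (rule borel_measurable_integrable)
    show "AE t in lborel. indicator {0..x} t *\<^sub>R (Jform (D' t) (D t) + Jform (D t) (D' t))
        = indicator {0..x} t *\<^sub>R complex_of_real (- 2 * Im z * N t)"
      using eq AE_lborel_singleton[of 0]
      by eventually_elim (auto simp: Jform_Dcoef N_def split: split_indicator)
  qed
  also have "\<dots> = of_real (- 2 * Im z * (LINT t:{0..x}|lborel. N t))"
    by (simp only: set_integral_complex_of_real set_integral_mult_right)
  finally have "Re (Jform (D x) (D x)) - Re (Jform (D 0) (D 0)) = - 2 * Im z * (LINT t:{0..x}|lborel. N t)"
    by (metis Re_complex_of_real minus_complex.sel)
  then show ?thesis
    using Re_Jform_self_ge[of "D x"] Re_Jform_self_nonpos[OF bc] by (simp add: N_def)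
qed

lemma homogeneous_L2_solution_eq_0:
  fixes D D' :: "real \<Rightarrow> complex^('m1::finite + 'm2::finite)"
  assumes "Im z > 0"
    and D': "\<And>b. b \<ge> 0 \<Longrightarrow> set_integrable lborel {0..b} D'"
    and D: "\<And>x. x \<ge> 0 \<Longrightarrow> (D' has_integral (D x - D 0)) {0..x}"
    and eq: "AE t in lborel. t > 0 \<longrightarrow> D' t = Dcoef v z t *v D t"
    and bc: "\<forall>p. D 0 $ Inl p = 0"
    and L2: "L2_on {0<..} D"
  shows "AE x in lborel. x \<ge> 0 \<longrightarrow> D x = 0"
proof -
  have "set_integrable lborel (insert 0 {0<..}) (\<lambda>t. (norm (D t))\<^sup>2)"
    using L2 unfolding L2_on_def by (intro set_integrable_lborel_insert) auto
  moreover have "insert 0 {0<..} = {0::real..}"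
    by auto
  ultimately have "set_integrable lborel {0..} (\<lambda>t. (norm (D t))\<^sup>2)"
    by simp
  moreover have "2 * Im z * (LINT t:{0..x}|lborel. (norm (D t))\<^sup>2) \<le> (norm (D x))\<^sup>2" if "x \<ge> 0" for x
    using that D by (intro homogeneous_energy_bound[OF that D'[OF that] _ eq bc]) simp
  ultimately have "AE x in lborel. x \<ge> 0 \<longrightarrow> (norm (D x))\<^sup>2 = 0"
    using \<open>Im z > 0\<close> by (intro AE_zero_if_dominates_primitive[where c = "2 * Im z"]) auto
  then show ?thesis
    by eventually_elim simp
qed

lemma L_resolvent_eq_unique:
  assumes "Im z > 0" and Y1: "L_resolvent_eq v z f Y1" and Y2: "L_resolvent_eq v z f Y2"
  shows "AE x in lborel. x > 0 \<longrightarrow> Y1 x = Y2 x"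
proof -
  obtain DY1 where dom1: "L_dom v Y1 DY1"
    and eq1: "AE x in lborel. x > 0 \<longrightarrow> Lexpr v Y1 DY1 x - z *s Y1 x = f x"
    using Y1 unfolding L_resolvent_eq_def by blast
  obtain DY2 where dom2: "L_dom v Y2 DY2"
    and eq2: "AE x in lborel. x > 0 \<longrightarrow> Lexpr v Y2 DY2 x - z *s Y2 x = f x"
    using Y2 unfolding L_resolvent_eq_def by blast
  define D where "D x = Y1 x - Y2 x" for x
  define D' where "D' t = DY1 t - DY2 t" for t
  have "AE x in lborel. x \<ge> 0 \<longrightarrow> D x = 0"
  proof (rule homogeneous_L2_solution_eq_0[OF \<open>Im z > 0\<close>])
    show "set_integrable lborel {0..b} D'" if "b \<ge> 0" for b
      using dom1 dom2 that unfolding L_dom_def D'_def[abs_def] by (intro set_integral_diff(1)) auto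
    show "(D' has_integral (D x - D 0)) {0..x}" if "x \<ge> 0" for x
    proof -
      have "(DY1 has_integral (Y1 x - Y1 0)) {0..x}" "(DY2 has_integral (Y2 x - Y2 0)) {0..x}"
        using dom1 dom2 that by (simp_all add: L_dom_def)
      from has_integral_diff[OF this] show ?thesis
        by (simp add: D_def D'_def[abs_def] algebra_simps)
    qed
    show "\<forall>p. D 0 $ Inl p = 0"
      using dom1 dom2 by (simp add: L_dom_def D_def)
    show "AE t in lborel. t > 0 \<longrightarrow> D' t = Dcoef v z t *v D t"
      using eq1 eq2
    proof eventually_elim
      case (elim t)
      show ?case
      proof
        assume "t > 0"
        with elim have "(- \<i>) *s (Jmat *v D' t) - Vmat (v t) *v D t = z *s D t + 0"
          by (simp add: Lexpr_def D_def D'_def matrix_vector_mult_diff_distrib vector_ssub_ldistrib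
              algebra_simps)
        then show "D' t = Dcoef v z t *v D t"
          by (subst (asm) Lexpr_eq_iff) simp
      qed
    qed
    have "L2_on {0<..} Y1" "L2_on {0<..} Y2"
      using dom1 dom2 by (simp_all add: L_dom_def)
    from L2_on_add[OF this(1) L2_on_bounded_linear[OF bounded_linear_minus[OF bounded_linear_ident] this(2)]]
    show "L2_on {0<..} D"
      by (simp add: D_def[abs_def])
  qed
  then show ?thesis
    by eventually_elim (simp add: D_def)
qed

section \<open>The resolvent formula\<close>

context
  fixes v :: "real \<Rightarrow> complex ^ 'm2::finite ^ 'm1::finite"
    and u :: "real \<Rightarrow> complex \<Rightarrow> complex ^ ('m1 + 'm2) ^ ('m1 + 'm2)"
    and \<phi> :: "complex \<Rightarrow> complex ^ 'm1 ^ 'm2"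
    and f :: "real \<Rightarrow> complex ^ ('m1 + 'm2)"
    and a :: real and z :: complex
  assumes a_pos: "a > 0"
    and v_loc: "\<forall>b\<ge>0. set_integrable lborel {0..b} v"
    and u_fund: "fund_sol v u"
    and phi_weyl: "weyl_fun u \<phi>"
    and z_up: "Im z > 0"
    and f_L2: "L2_on {0<..} f"
    and f_supp: "AE x in lborel. x > a \<longrightarrow> f x = 0"
begin

lemma set_integrable_Wint_integrand:
  "set_integrable lborel {0..b} (\<lambda>t. wfun_inv u \<phi> t z *v (Jmat *v f t))"
  by (rule set_integrable_bilinear_continuous[OF bounded_bilinear_matrix_vector_mult
        set_integrable_bounded_linear[OF matrix_vector_mul_bounded_linear
          L2_on_Ioi_imp_set_integrable[OF f_L2]] continuous_on_wfun_inv[OF v_loc u_fund]])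

lemma has_integral_Wint:
  assumes "x \<ge> 0"
  shows "((\<lambda>t. wfun_inv u \<phi> t z *v (Jmat *v f t)) has_integral Wint u \<phi> f z x) {0..x}"
proof -
  have "Wint u \<phi> f z x = integral {0..x} (\<lambda>t. wfun_inv u \<phi> t z *v (Jmat *v f t))"
    unfolding Wint_def
    by (rule integral_cong) (use matrix_inv_unique[OF wfun_mult_wfun_inv[OF v_loc u_fund]] in auto)
  then show ?thesis
    using set_borel_integral_eq_integral[OF set_integrable_Wint_integrand] by (simp add: integrable_integral)
qed

lemma Wint_eq_beyond_support:
  assumes "x \<ge> a"
  shows "Wint u \<phi> f z x = Wint u \<phi> f z a"
proof -
  let ?k = "\<lambda>t. wfun_inv u \<phi> t z *v (Jmat *v f t)"
  have "(LINT t:{a..x}|lborel. ?k t) = 0"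
    unfolding set_lebesgue_integral_def
    by (rule integral_eq_zero_AE)
       (use f_supp AE_lborel_singleton[of a] in \<open>eventually_elim, auto simp: indicator_def\<close>)
  moreover have "set_integrable lborel {a..x} ?k"
    by (rule set_integrable_subset[OF set_integrable_Wint_integrand[of x]]) (use a_pos in auto)
  ultimately have "(?k has_integral 0) {a..x}"
    using has_integral_set_borel_integral by fastforce
  from has_integral_combine[OF _ assms has_integral_Wint this] a_pos
  have "(?k has_integral Wint u \<phi> f z a) {0..x}"
    by simp
  then show ?thesis
    using has_integral_unique[OF has_integral_Wint] assms a_pos by simp
qed

lemma Ysol_primitive:
  assumes "b \<ge> 0"
  defines "DY \<equiv> \<lambda>t. Dcoef v z t *v Ysol u \<phi> f a t z + \<i> *s (Jmat *v f t)"
  shows "set_integrable lborel {0..b} DY"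
    and "(DY has_integral (Ysol u \<phi> f a b z - Ysol u \<phi> f a 0 z)) {0..b}"
proof -
  define k where "k t = wfun_inv u \<phi> t z *v (Jmat *v f t)" for t
  define G where "G x = Qmat (\<phi> z) *v (gvec u \<phi> f a z + \<i> *s Wint u \<phi> f z x)" for x
  have Y: "Ysol u \<phi> f a x z = u x z *v G x" for x
    by (simp add: Ysol_def wfun_def G_def matrix_vector_mul_assoc)
  have G_primitive: "((\<lambda>t. \<i> *s (Qmat (\<phi> z) *v k t)) has_integral (G x - G 0)) {0..x}"
    if "x \<in> {0..b}" for x
  proof -
    have "Wint u \<phi> f z 0 = 0"
      by (simp add: Wint_def)
    then have G_diff: "G x - G 0 = (mat \<i> ** Qmat (\<phi> z)) *v Wint u \<phi> f z x"
      by (simp add: G_def matrix_vector_right_distrib matrix_vector_mult_smult mat_mult_vec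
          matrix_vector_mul_assoc[symmetric])
    have integrand: "(mat \<i> ** Qmat (\<phi> z)) *v k t = \<i> *s (Qmat (\<phi> z) *v k t)" for t
      by (simp add: mat_mult_vec matrix_vector_mul_assoc[symmetric])
    have "((\<lambda>t. (mat \<i> ** Qmat (\<phi> z)) *v k t) has_integral ((mat \<i> ** Qmat (\<phi> z)) *v Wint u \<phi> f z x)) {0..x}"
      using has_integral_linear[OF has_integral_Wint[of x]
          matrix_vector_mul_bounded_linear[where A = "mat \<i> ** Qmat (\<phi> z)"]] that
      by (simp add: o_def k_def)
    then show ?thesis
      unfolding integrand G_diff .
  qed
  have u_primitive: "((\<lambda>t. Dcoef v z t ** u t z) has_integral (u x z - u 0 z)) {0..x}"
    if "x \<in> {0..b}" for x
    using that by (simp add: fund_sol_has_integral[OF v_loc u_fund] fund_sol_0[OF v_loc u_fund])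
  have "set_integrable lborel {0..b} (\<lambda>t. \<i> *s (Qmat (\<phi> z) *v k t))"
    using set_integrable_bounded_linear[OF
        matrix_vector_mul_bounded_linear[where A = "mat \<i> ** Qmat (\<phi> z)"]
        set_integrable_Wint_integrand]
    by (simp add: k_def mat_mult_vec matrix_vector_mul_assoc[symmetric])
  note ibp = integration_by_parts_bilinear[OF bounded_bilinear_matrix_vector_mult assms(1)
      set_integrable_Dcoef_fund_sol[OF v_loc u_fund assms(1)] this u_primitive G_primitive]
  have integrand_eq: "(Dcoef v z t ** u t z) *v G t + u t z *v (\<i> *s (Qmat (\<phi> z) *v k t)) = DY t"
    if "t \<in> {0..b}" for t
  proof -
    have "u t z *v (\<i> *s (Qmat (\<phi> z) *v k t)) = \<i> *s ((wfun u \<phi> t z ** wfun_inv u \<phi> t z) *v (Jmat *v f t))"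
      by (simp add: k_def wfun_def matrix_vector_mult_smult matrix_vector_mul_assoc matrix_mul_assoc)
    then show ?thesis
      using wfun_mult_wfun_inv(1)[OF v_loc u_fund, where x = t] that by (simp add: DY_def Y matrix_vector_mul_assoc)
  qed
  show "set_integrable lborel {0..b} DY"
    by (rule iffD1[OF set_integrable_cong[OF refl refl integrand_eq] ibp(1)])
  show "(DY has_integral (Ysol u \<phi> f a b z - Ysol u \<phi> f a 0 z)) {0..b}"
    unfolding Y by (rule iffD1[OF has_integral_cong[OF integrand_eq] ibp(2)])
qed

lemma Ysol_beyond_support:
  obtains c where "\<And>x. x \<ge> a \<Longrightarrow> Ysol u \<phi> f a x z = (u x z ** IPhi (\<phi> z)) *v c"
proof
  let ?c = "gvec u \<phi> f a z + \<i> *s Wint u \<phi> f z a"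
  fix x
  assume "x \<ge> a"
  have "\<forall>q. ?c $ Inr q = 0"
    by (simp add: gvec_def)
  then have "Qmat (\<phi> z) *v ?c = IPhi (\<phi> z) *v (\<chi> p. ?c $ Inl p)"
    by (rule Qmat_mult_vec_upper)
  then show "Ysol u \<phi> f a x z = (u x z ** IPhi (\<phi> z)) *v (\<chi> p. ?c $ Inl p)"
    by (simp add: Ysol_def wfun_def Wint_eq_beyond_support[OF \<open>x \<ge> a\<close>]
        matrix_vector_mul_assoc[symmetric])
qed

lemma L2_on_Ysol: "L2_on {0<..} (\<lambda>x. Ysol u \<phi> f a x z)"
proof (rule L2_on_Ioi_continuous_tail)
  show "continuous_on {0..b} (\<lambda>x. Ysol u \<phi> f a x z)" for b
    by (rule has_integral_primitive_continuous_on[where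
          f = "\<lambda>t. Dcoef v z t *v Ysol u \<phi> f a t z + \<i> *s (Jmat *v f t)"])
       (simp add: Ysol_primitive(2))
  show "a \<ge> 0"
    using a_pos by simp
  obtain c where c: "\<And>x. x \<ge> a \<Longrightarrow> Ysol u \<phi> f a x z = (u x z ** IPhi (\<phi> z)) *v c"
    using Ysol_beyond_support by blast
  have "L2_on {0<..} (\<lambda>x. u x z ** IPhi (\<phi> z))"
    using phi_weyl z_up by (simp add: weyl_fun_def)
  from L2_on_bounded_linear[OF bounded_bilinear.bounded_linear_left[OF
        bounded_bilinear_matrix_vector_mult] this]
  have "L2_on {a<..} (\<lambda>x. (u x z ** IPhi (\<phi> z)) *v c)"
    by (rule L2_on_subset) (use a_pos in auto)
  then show "L2_on {a<..} (\<lambda>x. Ysol u \<phi> f a x z)"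
    by (subst L2_on_cong[of _ _ "\<lambda>x. (u x z ** IPhi (\<phi> z)) *v c"]) (simp_all add: c)
qed

lemma L_resolvent_eq_Ysol: "L_resolvent_eq v z f (\<lambda>x. Ysol u \<phi> f a x z)"
proof -
  define DY where "DY t = Dcoef v z t *v Ysol u \<phi> f a t z + \<i> *s (Jmat *v f t)" for t
  have Lexpr_Ysol: "Lexpr v (\<lambda>x. Ysol u \<phi> f a x z) DY = (\<lambda>t. z *s Ysol u \<phi> f a t z + f t)"
    unfolding Lexpr_def DY_def by (rule ext, rule Lexpr_eq_iff[THEN iffD2, OF refl])
  have "L2_on {0<..} (\<lambda>t. z *s Ysol u \<phi> f a t z + f t)"
    using L2_on_add[OF L2_on_bounded_linear[OF matrix_vector_mul_bounded_linear L2_on_Ysol] f_L2,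
        of "mat z"]
    by (simp add: mat_mult_vec)
  moreover have "Ysol u \<phi> f a 0 z $ Inl p = 0" for p
    by (simp add: Ysol_def wfun_def fund_sol_0[OF v_loc u_fund] Qmat_mult_vec_Inl gvec_def
        Wint_def matrix_vector_mul_assoc[symmetric])
  ultimately have "L_dom v (\<lambda>x. Ysol u \<phi> f a x z) DY"
    unfolding L_dom_def Lexpr_Ysol
    by (simp add: L2_on_Ysol Ysol_primitive DY_def[abs_def])
  then show ?thesis
    unfolding L_resolvent_eq_def by (intro exI[of _ DY]) (simp add: Lexpr_Ysol)
qed

end

theorem lemmaA1:
  fixes v :: "real \<Rightarrow> complex ^ 'm2::finite ^ 'm1::finite"
    and u :: "real \<Rightarrow> complex \<Rightarrow> complex ^ ('m1 + 'm2) ^ ('m1 + 'm2)"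
    and \<phi> :: "complex \<Rightarrow> complex ^ 'm1 ^ 'm2"
    and f :: "real \<Rightarrow> complex ^ ('m1 + 'm2)"
    and a :: real and z :: complex
  assumes a_pos: "a > 0"
    and v_loc: "\<forall>b\<ge>0. set_integrable lborel {0..b} v"
    and v_supp: "AE x in lborel. x > a \<longrightarrow> v x = 0"
    and u_fund: "fund_sol v u"
    and phi_weyl: "weyl_fun u \<phi>"
    and z_up: "Im z > 0"
    and f_L2: "L2_on {0<..} f"
    and f_supp: "AE x in lborel. x > a \<longrightarrow> f x = 0"
  shows "L_resolvent_eq v z f (\<lambda>x. Ysol u \<phi> f a x z)
    \<and> (\<forall>Y'. L_resolvent_eq v z f Y' \<longrightarrow> (AE x in lborel. x > 0 \<longrightarrow> Y' x = Ysol u \<phi> f a x z))"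
proof -
  have Y: "L_resolvent_eq v z f (\<lambda>x. Ysol u \<phi> f a x z)"
    by (rule L_resolvent_eq_Ysol[OF a_pos v_loc u_fund phi_weyl z_up f_L2 f_supp])
  moreover have "AE x in lborel. x > 0 \<longrightarrow> Y' x = Ysol u \<phi> f a x z" if "L_resolvent_eq v z f Y'" for Y'
    by (rule L_resolvent_eq_unique[OF z_up that Y])
  ultimately show ?thesis
    by blast
qed

end
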